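(* Let $p_j>0$, $q_{j+1}>0$, $r_j\ge 0$ ($j\ge 0$) be the one-step transition probabilities of a random walk on $\mathcal{N}=\{0,1,2,\dots\}$ (up-step $p_j$, holding $r_j$, down-step $q_j$ from state $j$), with $q_0:=0$ and $p_j+q_j+r_j=1$ for all $j\ge0$. Let $\pi_0:=1$, $\pi_n:=\frac{p_0\cdots p_{n-1}}{q_1\cdots q_n}$ ($n\ge1$), and define polynomials $Q_n$ by $Q_0(x)=1$, $p_0Q_1(x)=x-r_0$, and $xQ_n(x)=q_nQ_{n-1}(x)+r_nQ_n(x)+p_nQ_{n+1}(x)$ for $n\ge 1$. Let $\psi$ be the unique Borel probability measure on $[-1,1]$ with infinite support with respect to which the $Q_n$ are orthogonal, and let $\eta:=\sup\operatorname{supp}(\psi)$. If \[\sum_{j\ge 0}\frac{1}{p_j\pi_j}\sum_{k=0}^j r_k\pi_k=\infty,\] then $\lim_{n\to\infty}|Q_n(-\eta)/Q_n(\eta)|=\infty$.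
   Context: It is known that $\eta>0$ and that $Q_n(x)>0$ for all $n\ge0$ whenever $x\ge\eta$. *)

theory Defs
  imports "HOL-Analysis.Analysis" "HOL-Probability.Probability"
begin

fun bdQ :: "(nat \<Rightarrow> real) \<Rightarrow> (nat \<Rightarrow> real) \<Rightarrow> (nat \<Rightarrow> real) \<Rightarrow> nat \<Rightarrow> real \<Rightarrow> real" where
  "bdQ p q r 0 x = 1"
| "bdQ p q r (Suc 0) x = (x - r 0) / p 0"
| "bdQ p q r (Suc (Suc n)) x =
     ((x - r (Suc n)) * bdQ p q r (Suc n) x - q (Suc n) * bdQ p q r n x) / p (Suc n)"

definition bdpi :: "(nat \<Rightarrow> real) \<Rightarrow> (nat \<Rightarrow> real) \<Rightarrow> nat \<Rightarrow> real" where
  "bdpi p q n = (\<Prod>i<n. p i) / (\<Prod>i\<in>{1..n}. q i)"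

definition msupport :: "real measure \<Rightarrow> real set" where
  "msupport M = {x. \<forall>e>0. emeasure M (ball x e) > 0}"

end

theory Submission
  imports Defs
begin

text \<open>Write Q_n for Q_n(\<eta>) > 0 and R_n for (-1)^n Q_n(-\<eta>) (called Qrefl below).
  R_n satisfies the recurrence of Q_n with r_n replaced by -r_n, so the discrete Wronskian
  \<pi>_n p_n (R_(n+1) Q_n - Q_(n+1) R_n) equals 2 \<Sum>_(k\<le>n) r_k \<pi>_k R_k Q_k. Inductively this
  gives R_n \<ge> Q_n. Since \<eta> \<le> 1 makes Q_n nonincreasing, the Wronskian then bounds the
  increment of R_n / Q_n from below by 2/(p_n \<pi>_n) \<Sum>_(k\<le>n) r_k \<pi>_k, the n-th term of the
  divergent series.\<close>

lemma msupport_subset_closed: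
  assumes "sets M = sets borel" and "closed C" and "emeasure M (- C) = 0"
  shows "msupport M \<subseteq> C"
proof
  fix x assume x: "x \<in> msupport M"
  show "x \<in> C"
  proof (rule ccontr)
    assume "x \<notin> C"
    then obtain e where e: "e > 0" "ball x e \<subseteq> - C"
      using \<open>closed C\<close> open_contains_ball by (metis ComplI open_Compl)
    have "emeasure M (ball x e) \<le> emeasure M (- C)"
      using e assms(1,2) by (intro emeasure_mono) (auto simp: sets_eq_imp_space_eq)
    with assms(3) x e(1) show False
      unfolding msupport_def by auto
  qed
qed

lemma filterlim_partial_sums_at_top:
  fixes a :: "nat \<Rightarrow> real"
  assumes nonneg: "\<And>n. a n \<ge> 0" and "\<not> summable a"
  shows "filterlim (\<lambda>n. \<Sum>i<n. a i) at_top sequentially"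
  unfolding filterlim_at_top
proof
  fix Z :: real
  obtain N where N: "(\<Sum>i<N. a i) > Z"
    using summableI_nonneg_bounded[of a Z] nonneg \<open>\<not> summable a\<close> by (meson not_le)
  have "Z \<le> (\<Sum>i<n. a i)" if "N \<le> n" for n
    using N sum_mono2[of "{..<n}" "{..<N}" a] that nonneg by auto
  then show "\<forall>\<^sub>F n in sequentially. Z \<le> (\<Sum>i<n. a i)"
    by (rule eventually_sequentiallyI)
qed

locale birth_death_chain =
  fixes p q r :: "nat \<Rightarrow> real"
  assumes p_pos: "\<And>j. p j > 0"
      and q_pos: "\<And>j. q (Suc j) > 0"
      and q_0: "q 0 = 0"
      and r_nonneg: "\<And>j. r j \<ge> 0"
      and stochastic: "\<And>j. p j + q j + r j = 1"
begin

abbreviation Q :: "nat \<Rightarrow> real \<Rightarrow> real" where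
  "Q \<equiv> bdQ p q r"

definition Qrefl :: "nat \<Rightarrow> real \<Rightarrow> real" where
  "Qrefl n x = (-1) ^ n * Q n (-x)"

definition hold_term :: "nat \<Rightarrow> real" where
  "hold_term j = 1 / (p j * bdpi p q j) * (\<Sum>k\<le>j. r k * bdpi p q k)"

lemma bdpi_pos: "bdpi p q n > 0"
proof -
  have "(\<Prod>i\<in>{1..n}. q i) > 0"
    using q_pos by (intro prod_pos) (metis atLeastAtMost_iff not0_implies_Suc not_one_le_zero)
  then show ?thesis
    unfolding bdpi_def using p_pos by (simp add: prod_pos)
qed

lemma bdpi_Suc: "bdpi p q (Suc n) * q (Suc n) = bdpi p q n * p n"
proof -
  have "{1..Suc n} = insert (Suc n) {1..n}" by auto
  then show ?thesis
    unfolding bdpi_def using q_pos[of n] by (simp add: field_simps)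
qed

text \<open>The truncated index n - 1 at n = 0 is harmless because q 0 = 0.\<close>

lemma Q_Suc: "p n * Q (Suc n) x = (x - r n) * Q n x - q n * Q (n - 1) x"
  using p_pos[of n] q_0 by (cases n) (auto simp: less_irrefl)

lemma Qrefl_Suc: "p n * Qrefl (Suc n) x = (x + r n) * Qrefl n x - q n * Qrefl (n - 1) x"
proof (cases n)
  case 0
  then show ?thesis
    using p_pos[of 0] q_0 unfolding Qrefl_def by simp
next
  case (Suc m)
  have "p n * Qrefl (Suc n) x = (-1) ^ m * (p n * Q (Suc n) (-x))"
    unfolding Qrefl_def Suc by simp
  also have "\<dots> = (-1) ^ m * ((- x - r n) * Q n (-x) - q n * Q m (-x))"
    using Q_Suc[of n "-x"] Suc by simp
  also have "\<dots> = (x + r n) * Qrefl n x - q n * Qrefl (n - 1) x"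
    unfolding Qrefl_def Suc by (simp add: algebra_simps)
  finally show ?thesis .
qed

lemma Q_decseq:
  assumes "x \<le> 1" and Q_pos: "\<And>n. Q n x > 0"
  shows "decseq (\<lambda>n. Q n x)"
proof (rule decseq_SucI)
  fix n show "Q (Suc n) x \<le> Q n x"
  proof (induction n)
    case 0
    show ?case
      using \<open>x \<le> 1\<close> stochastic[of 0] q_0 p_pos[of 0] by (simp add: pos_divide_le_eq)
  next
    case (Suc n)
    have r_eq: "r (Suc n) = 1 - p (Suc n) - q (Suc n)"
      using stochastic[of "Suc n"] by linarith
    have "p (Suc n) * (Q (Suc (Suc n)) x - Q (Suc n) x)
        = (x - 1) * Q (Suc n) x + q (Suc n) * (Q (Suc n) x - Q n x)"
      using Q_Suc[of "Suc n" x] unfolding r_eq by (simp del: bdQ.simps add: algebra_simps)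
    also have "\<dots> \<le> 0"
      using \<open>x \<le> 1\<close> Q_pos[of "Suc n"] Suc q_pos[of n]
      by (intro add_nonpos_nonpos) (simp_all add: mult_le_0_iff)
    finally show ?case
      using p_pos[of "Suc n"] by (simp add: mult_le_0_iff)
  qed
qed

lemma wronskian:
  "bdpi p q n * p n * (Qrefl (Suc n) x * Q n x - Q (Suc n) x * Qrefl n x)
     = 2 * (\<Sum>k\<le>n. r k * bdpi p q k * Qrefl k x * Q k x)"
proof (induction n)
  case 0
  show ?case
    using Qrefl_Suc[of 0 x] Q_Suc[of 0 x] q_0
    unfolding Qrefl_def by (simp add: bdpi_def algebra_simps)
next
  case (Suc n)
  let ?\<pi> = "bdpi p q (Suc n)"
  have "?\<pi> * p (Suc n) * (Qrefl (Suc (Suc n)) x * Q (Suc n) x - Q (Suc (Suc n)) x * Qrefl (Suc n) x)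
      = ?\<pi> * ((p (Suc n) * Qrefl (Suc (Suc n)) x) * Q (Suc n) x
               - (p (Suc n) * Q (Suc (Suc n)) x) * Qrefl (Suc n) x)"
    by (simp add: algebra_simps)
  also have "\<dots> = 2 * r (Suc n) * ?\<pi> * Qrefl (Suc n) x * Q (Suc n) x
      + (?\<pi> * q (Suc n)) * (Qrefl (Suc n) x * Q n x - Q (Suc n) x * Qrefl n x)"
    unfolding Qrefl_Suc[of "Suc n"] Q_Suc[of "Suc n"] by (simp add: algebra_simps)
  also have "\<dots> = 2 * (\<Sum>k\<le>Suc n. r k * bdpi p q k * Qrefl k x * Q k x)"
    using Suc unfolding bdpi_Suc by (simp add: algebra_simps)
  finally show ?case .
qed

lemma Q_le_Qrefl:
  assumes Q_pos: "\<And>n. Q n x > 0"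
  shows "Q n x \<le> Qrefl n x"
proof (induction n rule: less_induct)
  case (less n)
  show ?case
  proof (cases n)
    case 0
    then show ?thesis unfolding Qrefl_def by simp
  next
    case (Suc m)
    have "0 \<le> r k * bdpi p q k * Qrefl k x * Q k x" if "k \<le> m" for k
    proof -
      have "0 \<le> Qrefl k x"
        using less[of k] Q_pos[of k] that Suc by fastforce
      then show ?thesis
        using r_nonneg[of k] bdpi_pos[of k] Q_pos[of k] by simp
    qed
    then have "0 \<le> (\<Sum>k\<le>m. r k * bdpi p q k * Qrefl k x * Q k x)"
      by (intro sum_nonneg) auto
    then have "0 \<le> bdpi p q m * p m * (Qrefl (Suc m) x * Q m x - Q (Suc m) x * Qrefl m x)"
      unfolding wronskian by simp
    then have "Q (Suc m) x * Qrefl m x \<le> Qrefl (Suc m) x * Q m x"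
      using mult_pos_pos[OF bdpi_pos[of m] p_pos[of m]] by (simp add: zero_le_mult_iff)
    moreover have "Q (Suc m) x * Q m x \<le> Q (Suc m) x * Qrefl m x"
      using less[of m] Suc Q_pos[of "Suc m"] by simp
    ultimately have "Q m x * Q (Suc m) x \<le> Q m x * Qrefl (Suc m) x"
      by (metis mult.commute order_trans)
    then show ?thesis
      using Q_pos[of m] Suc by simp
  qed
qed

lemma hold_term_nonneg: "hold_term j \<ge> 0"
  unfolding hold_term_def
  using p_pos[of j] bdpi_pos r_nonneg by (intro mult_nonneg_nonneg sum_nonneg) (auto intro: less_imp_le)

lemma ratio_increment:
  assumes "x \<le> 1" and Q_pos: "\<And>n. Q n x > 0"
  shows "Qrefl (Suc n) x / Q (Suc n) x - Qrefl n x / Q n x \<ge> 2 * hold_term n"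
proof -
  have Q_dec: "Q j x \<le> Q k x" if "k \<le> j" for j k
    using decseqD[OF Q_decseq[OF assms] that] .
  have "r k * bdpi p q k * (Q n x * Q (Suc n) x) \<le> r k * bdpi p q k * Qrefl k x * Q k x"
    if "k \<le> n" for k
  proof -
    have "Q n x * Q (Suc n) x \<le> Q k x * Q k x"
      using Q_dec[of k n] Q_dec[of k "Suc n"] that Q_pos[of n] Q_pos[of "Suc n"]
      by (intro mult_mono) auto
    also have "\<dots> \<le> Qrefl k x * Q k x"
      using Q_le_Qrefl[OF Q_pos, of k] Q_pos[of k] by simp
    finally show ?thesis
      using r_nonneg[of k] bdpi_pos[of k] by (simp add: mult_left_mono mult.assoc)
  qed
  then have "(\<Sum>k\<le>n. r k * bdpi p q k) * (Q n x * Q (Suc n) x)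
      \<le> (\<Sum>k\<le>n. r k * bdpi p q k * Qrefl k x * Q k x)"
    unfolding sum_distrib_right by (intro sum_mono) auto
  then have "2 * (Q n x * Q (Suc n) x) * (\<Sum>k\<le>n. r k * bdpi p q k)
      \<le> bdpi p q n * p n * (Qrefl (Suc n) x * Q n x - Q (Suc n) x * Qrefl n x)"
    unfolding wronskian by (simp add: mult_ac)
  then show ?thesis
    unfolding hold_term_def using Q_pos[of n] Q_pos[of "Suc n"] bdpi_pos[of n] p_pos[of n]
    by (simp add: field_simps)
qed

lemma ratio_lower_bound:
  assumes "x \<le> 1" and "\<And>n. Q n x > 0"
  shows "Qrefl n x / Q n x \<ge> 1 + 2 * (\<Sum>j<n. hold_term j)"
proof (induction n)
  case 0
  then show ?case unfolding Qrefl_def by simp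
next
  case (Suc n)
  then show ?case using ratio_increment[OF assms, of n] by simp
qed

lemma abs_ratio_tendsto_at_top:
  assumes "x \<le> 1" and Q_pos: "\<And>n. Q n x > 0" and "\<not> summable hold_term"
  shows "filterlim (\<lambda>n. \<bar>Q n (-x) / Q n x\<bar>) at_top sequentially"
proof (rule filterlim_at_top_mono)
  show "filterlim (\<lambda>n. 1 + 2 * (\<Sum>j<n. hold_term j)) at_top sequentially"
    using filterlim_partial_sums_at_top[OF hold_term_nonneg \<open>\<not> summable hold_term\<close>]
    by (intro filterlim_tendsto_add_at_top filterlim_tendsto_pos_mult_at_top) auto
  have "\<bar>Q n (-x) / Q n x\<bar> = Qrefl n x / Q n x" for n
  proof -
    have "0 \<le> Qrefl n x"
      using Q_le_Qrefl[OF Q_pos, of n] Q_pos[of n] by linarith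
    moreover have "\<bar>Q n (-x)\<bar> = \<bar>Qrefl n x\<bar>"
      unfolding Qrefl_def by (simp add: abs_mult power_abs)
    ultimately show ?thesis
      using Q_pos[of n] by (simp add: abs_divide)
  qed
  then show "\<forall>\<^sub>F n in sequentially. 1 + 2 * (\<Sum>j<n. hold_term j) \<le> \<bar>Q n (-x) / Q n x\<bar>"
    using ratio_lower_bound[OF assms(1,2)] by simp
qed

end

theorem proposition1:
  fixes p q r :: "nat \<Rightarrow> real" and \<psi> :: "real measure" and \<eta> :: real
  assumes p_pos: "\<And>j. p j > 0"
      and q_pos: "\<And>j. q (Suc j) > 0"
      and q0: "q 0 = 0"
      and r_nn: "\<And>j. r j \<ge> 0"
      and sum1: "\<And>j. p j + q j + r j = 1"
      and psi_prob: "prob_space \<psi>"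
      and psi_sets: "sets \<psi> = sets borel"
      and psi_on: "emeasure \<psi> (UNIV - {-1..1}) = 0"
      and psi_inf: "infinite (msupport \<psi>)"
      and psi_orth: "\<And>m n. m \<noteq> n \<Longrightarrow>
                       integral\<^sup>L \<psi> (\<lambda>x. bdQ p q r m x * bdQ p q r n x) = 0"
      and eta_def: "\<eta> = Sup (msupport \<psi>)"
      and eta_pos: "\<eta> > 0"
      and Q_pos: "\<And>n x. x \<ge> \<eta> \<Longrightarrow> bdQ p q r n x > 0"
      and diverge: "\<not> summable (\<lambda>j. 1 / (p j * bdpi p q j) *
                                    (\<Sum>k\<le>j. r k * bdpi p q k))"
  shows "filterlim (\<lambda>n. \<bar>bdQ p q r n (-\<eta>) / bdQ p q r n \<eta>\<bar>) at_top sequentially"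
proof -
  \<comment> \<open>Besides the walk, only \<open>\<eta> \<le> 1\<close> and the positivity of \<open>Q\<^sub>n\<close> on \<open>[\<eta>,\<infinity>)\<close>
    are used; the orthogonality of the \<open>Q\<^sub>n\<close> enters only through \<open>Q_pos\<close>.\<close>
  interpret birth_death_chain p q r
    using p_pos q_pos q0 r_nn sum1 by unfold_locales
  have "msupport \<psi> \<subseteq> {-1..1}"
    using psi_sets psi_on by (intro msupport_subset_closed) (auto simp: Compl_eq_Diff_UNIV)
  moreover have "msupport \<psi> \<noteq> {}"
    using psi_inf by auto
  ultimately have "\<eta> \<le> 1"
    unfolding eta_def by (intro cSup_least) auto
  moreover have "\<not> summable hold_term"
    using diverge unfolding hold_term_def .
  ultimately show ?thesis
    using Q_pos by (intro abs_ratio_tendsto_at_top) auto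
qed

end
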